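(* Let $\Bbbk=\mathbb Z$ or $\mathbb Q$. Let $x,y,z$ be a basis of $H^2(BT^3;\mathbb Z)$ and let $\tilde\Gamma$ be the $3$-valent unsigned GKM graph with $T^3$-labeling on the complete bipartite graph with vertices $1,\dots,6$ and edges $16,25,34$ labeled $x$, edges $12,36,45$ labeled $y$, and edges $14,23,56$ labeled $z$ (with the connection mapping, along each edge, the edge with a given label to the edge with the same label). Let $\Gamma$ be the unsigned GKM graph of the $T^2$-action on the flag manifold $\mathrm{SU}(3)/T^2$ by left multiplication, and let $p\colon H^2(BT^3;\mathbb Z)\to H^2(BT^2;\mathbb Z)$ be an epimorphism such that $\tilde\Gamma$ extends $\Gamma$ (same graph and connection, $p\circ\alpha_{\tilde\Gamma}=\alpha_\Gamma$ modulo signs). Then $H^*_{T^3}(\tilde\Gamma;\Bbbk)$ is not a free $H^*(BT^3;\Bbbk)$-module, and the induced map $p_*\colon H^*_{T^3}(\tilde\Gamma;\Bbbk)\to H^*_{T^2}(\Gamma;\Bbbk)$, $f\mapsto p\circ f$, is not surjective.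
   Context: For a graph with axial function $\alpha$ (values in $H^2(BT;\mathbb Z)/\{\pm1\}$), the equivariant graph cohomology is $H^*_T(\Gamma;\Bbbk)=\{f\colon V\to H^*(BT;\Bbbk)\mid f(t(e))-f(i(e))\in(\alpha(e))\ \forall e\}$, a module over the polynomial ring $H^*(BT;\Bbbk)$. The GKM graph of $\mathrm{SU}(3)/T^2$ has the six $T^2$-fixed points as vertices, forms a complete bipartite graph $K_{3,3}$, and its labels at every vertex are the three positive roots of $\mathrm{SU}(3)$ modulo sign; such an epimorphism $p$ exists (sending $x,y,z$ to the three positive roots suitably). *)

theory Defs
  imports Main "HOL-Computational_Algebra.Polynomial" "HOL-Library.Product_Plus"
    "HOL-Combinatorics.Transposition" "HOL-Library.Function_Algebras" "HOL-Combinatorics.Permutations"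
begin

type_synonym lat3 = "int \<times> int \<times> int"   \<comment> \<open>H^2(BT^3;Z) in standard coordinates\<close>
type_synonym lat2 = "int \<times> int"           \<comment> \<open>H^2(BT^2;Z), basis a1, a2 (simple roots)\<close>

definition smul3 :: "int \<Rightarrow> lat3 \<Rightarrow> lat3" where
  "smul3 c v = (c * fst v, c * fst (snd v), c * snd (snd v))"

definition is_basis3 :: "lat3 \<Rightarrow> lat3 \<Rightarrow> lat3 \<Rightarrow> bool" where
  "is_basis3 x y z \<longleftrightarrow>
     (\<forall>v. \<exists>!c::int \<times> int \<times> int.
        v = smul3 (fst c) x + smul3 (fst (snd c)) y + smul3 (snd (snd c)) z)"

text \<open>H^*(BT^3;k) = k[X,Y,Z] as 'k poly poly poly (X outermost, Z innermost).\<close>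
definition varX :: "'k::comm_ring_1 poly poly poly" where "varX = [:0, 1:]"
definition varY :: "'k::comm_ring_1 poly poly poly" where "varY = [:[:0, 1:]:]"
definition varZ :: "'k::comm_ring_1 poly poly poly" where "varZ = [:[:[:0, 1:]:]:]"

text \<open>H^*(BT^2;k) = k[U,V] as 'k poly poly; U,V correspond to a1,a2.\<close>
definition varU :: "'k::comm_ring_1 poly poly" where "varU = [:0, 1:]"
definition varV :: "'k::comm_ring_1 poly poly" where "varV = [:[:0, 1:]:]"

definition lin3 :: "lat3 \<Rightarrow> 'k::comm_ring_1 poly poly poly" where
  "lin3 v = of_int (fst v) * varX + of_int (fst (snd v)) * varY + of_int (snd (snd v)) * varZ"

definition lin2 :: "lat2 \<Rightarrow> 'k::comm_ring_1 poly poly" where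
  "lin2 v = of_int (fst v) * varU + of_int (snd v) * varV"

definition eval3 :: "'k::comm_ring_1 poly poly \<Rightarrow> 'k poly poly \<Rightarrow> 'k poly poly
                       \<Rightarrow> 'k poly poly poly \<Rightarrow> 'k poly poly" where
  "eval3 a b c P =
     poly (map_poly (\<lambda>Q. poly (map_poly (\<lambda>R. poly (map_poly (\<lambda>r. [:[:r:]:]) R) c) Q) b) P) a"

text \<open>The ring map H^*(BT^3;k) -> H^*(BT^2;k) induced by p : H^2(BT^3;Z) -> H^2(BT^2;Z).\<close>
definition pring :: "(lat3 \<Rightarrow> lat2) \<Rightarrow> 'k::comm_ring_1 poly poly poly \<Rightarrow> 'k poly poly" where
  "pring p = eval3 (lin2 (p (1,0,0))) (lin2 (p (0,1,0))) (lin2 (p (0,0,1)))"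

text \<open>Edges are triples (i(e), t(e), label); the label is already a polynomial (degree 2).\<close>
definition graph_cohom :: "'v set \<Rightarrow> ('v \<times> 'v \<times> 'r::comm_ring_1) set \<Rightarrow> ('v \<Rightarrow> 'r) set" where
  "graph_cohom V E = {f. (\<forall>v. v \<notin> V \<longrightarrow> f v = 0) \<and> (\<forall>(a, b, l) \<in> E. l dvd (f b - f a))}"

definition free_submodule :: "('v \<Rightarrow> 'r::comm_ring_1) set \<Rightarrow> bool" where
  "free_submodule M \<longleftrightarrow>
     (\<exists>B. B \<subseteq> M \<and> \<not> module.dependent (\<lambda>r f v. r * f v) B
          \<and> module.span (\<lambda>r f v. r * f v) B = M)"

definition Etilde :: "lat3 \<Rightarrow> lat3 \<Rightarrow> lat3 \<Rightarrow> (nat \<times> nat \<times> lat3) set" where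
  "Etilde x y z = {(1,6,x), (2,5,x), (3,4,x), (1,2,y), (3,6,y), (4,5,y), (1,4,z), (2,3,z), (5,6,z)}"

definition Htilde :: "lat3 \<Rightarrow> lat3 \<Rightarrow> lat3 \<Rightarrow> (nat \<Rightarrow> 'k::comm_ring_1 poly poly poly) set" where
  "Htilde x y z = graph_cohom {1..6} ((\<lambda>(a, b, l). (a, b, lin3 l)) ` Etilde x y z)"

text \<open>Vertices: Weyl group S_3 (permutations of {1,2,3}) = the T^2-fixed points.\<close>
definition S3 :: "(nat \<Rightarrow> nat) set" where "S3 = {w. w permutes {1,2,3}}"

text \<open>H^2(BT^2;Z) is taken to be the lattice of the effectively acting torus T^2 = T/Z(SU(3)),
  i.e. the root lattice, with basis a1 = t1 - t2, a2 = t2 - t3 (so t1 - t3 = a1 + a2).\<close>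
definition root :: "nat \<Rightarrow> nat \<Rightarrow> lat2" where
  "root i j = (if (i, j) = (1, 2) then (1, 0) else if (i, j) = (2, 3) then (0, 1) else (1, 1))"

definition EGamma :: "((nat \<Rightarrow> nat) \<times> (nat \<Rightarrow> nat) \<times> lat2) set" where
  "EGamma = {(w, transpose i j \<circ> w, root i j) | w i j.
               w \<in> S3 \<and> i \<in> {1,2,3} \<and> j \<in> {1,2,3} \<and> i < j}"

definition HGamma :: "((nat \<Rightarrow> nat) \<Rightarrow> 'k::comm_ring_1 poly poly) set" where
  "HGamma = graph_cohom S3 ((\<lambda>(a, b, l). (a, b, lin2 l)) ` EGamma)"

definition extends_via :: "lat3 \<Rightarrow> lat3 \<Rightarrow> lat3 \<Rightarrow> (lat3 \<Rightarrow> lat2) \<Rightarrow> (nat \<Rightarrow> nat \<Rightarrow> nat) \<Rightarrow> bool" where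
  "extends_via x y z p \<phi> \<longleftrightarrow>
     bij_betw \<phi> {1..6} S3 \<and>
     (\<forall>a\<in>{1..6}. \<forall>b\<in>{1..6}.
        (\<exists>l. (a, b, l) \<in> Etilde x y z \<or> (b, a, l) \<in> Etilde x y z) \<longleftrightarrow> (\<exists>r. (\<phi> a, \<phi> b, r) \<in> EGamma)) \<and>
     (\<forall>(a, b, l) \<in> Etilde x y z. \<forall>r.
        ((\<phi> a, \<phi> b, r) \<in> EGamma \<or> (\<phi> b, \<phi> a, r) \<in> EGamma) \<longrightarrow> (p l = r \<or> p l = - r))"

text \<open>The induced map p_* : f |-> p o f, transported along phi.\<close>
definition pstar :: "(lat3 \<Rightarrow> lat2) \<Rightarrow> (nat \<Rightarrow> nat \<Rightarrow> nat)
                     \<Rightarrow> (nat \<Rightarrow> 'k::comm_ring_1 poly poly poly) \<Rightarrow> ((nat \<Rightarrow> nat) \<Rightarrow> 'k poly poly)" where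
  "pstar p \<phi> f = (\<lambda>w. if w \<in> S3 then pring p (f (inv_into {1..6} \<phi> w)) else 0)"

end

theory Submission
  imports Defs
begin

(* Let m be the ideal of polynomials without constant term. Along the 4-cycle 1-2-5-6 of
  tilde Gamma, with labels y, x, z, x, the edge differences of a class satisfy
  y q12 + x q25 + z q56 = x q16; taking the linear coefficient dual to y shows that q12 has no
  constant term, so the difference of any class between the vertices 2 and 1 lies in y m.

  Non-freeness: the classes f = xy on {1,4}, g = yz on {1,3,4,6} and h = -xz on {3,6} satisfy
  z f = x g + y h. In a free module this relation holds coefficientwise in a basis, so the
  coefficients of f lie in (x, y), which is inside m. Hence f(2) - f(1) lies in y m^2, whereas
  it equals -xy and x is not in m^2.

  Non-surjectivity: the class w |-> w(t1 - t3) of Gamma changes along every edge by a nonzero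
  multiple of the edge label, so its difference along the image of the edge 12 is a nonzero
  linear form. For a class in the image of p_* that difference lies in p(y) p(m), which has no
  linear part. *)

lemma coeff_mult_Suc_0:
  "coeff (p * q) (Suc 0) = coeff p 0 * coeff q (Suc 0) + coeff p (Suc 0) * coeff q 0"
  by (simp add: coeff_mult atMost_Suc add.commute)

lemma sum_fun_apply: "sum F A x = (\<Sum>a\<in>A. F a x)"
  by (induct A rule: infinite_finite_induct) auto

definition dot3 :: "lat3 \<Rightarrow> lat3 \<Rightarrow> int" where
  "dot3 l v = fst l * fst v + fst (snd l) * fst (snd v) + snd (snd l) * snd (snd v)"

definition const_term3 :: "'k::comm_ring_1 poly poly poly \<Rightarrow> 'k" where
  "const_term3 P = coeff (coeff (coeff P 0) 0) 0"

definition dir_deriv0 :: "lat3 \<Rightarrow> 'k::comm_ring_1 poly poly poly \<Rightarrow> 'k" where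
  "dir_deriv0 v P =
     of_int (fst v) * coeff (coeff (coeff P 1) 0) 0 + of_int (fst (snd v)) * coeff (coeff (coeff P 0) 1) 0
     + of_int (snd (snd v)) * coeff (coeff (coeff P 0) 0) 1"

lemma const_term3_add [simp]: "const_term3 (P + Q) = const_term3 P + const_term3 Q"
  and const_term3_diff [simp]: "const_term3 (P - Q) = const_term3 P - const_term3 Q"
  and const_term3_mult [simp]: "const_term3 (P * Q) = const_term3 P * const_term3 Q"
  by (simp_all add: const_term3_def coeff_mult_0)

lemma dir_deriv0_add [simp]: "dir_deriv0 v (P + Q) = dir_deriv0 v P + dir_deriv0 v Q"
  and dir_deriv0_diff [simp]: "dir_deriv0 v (P - Q) = dir_deriv0 v P - dir_deriv0 v Q"
  and dir_deriv0_minus [simp]: "dir_deriv0 v (- P) = - dir_deriv0 v P"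
  and dir_deriv0_0 [simp]: "dir_deriv0 v 0 = 0"
  by (simp_all add: dir_deriv0_def algebra_simps)

lemma dir_deriv0_mult [simp]:
  "dir_deriv0 v (P * Q) = const_term3 P * dir_deriv0 v Q + dir_deriv0 v P * const_term3 Q"
  by (simp add: dir_deriv0_def const_term3_def coeff_mult_0 coeff_mult_Suc_0 algebra_simps)

lemma dir_deriv0_sum: "dir_deriv0 v (sum F A) = (\<Sum>a\<in>A. dir_deriv0 v (F a))"
  by (induct A rule: infinite_finite_induct) simp_all

lemma const_term3_lin3 [simp]: "const_term3 (lin3 l) = 0"
  by (simp add: const_term3_def lin3_def varX_def varY_def varZ_def of_int_poly)

lemma dir_deriv0_lin3 [simp]: "dir_deriv0 v (lin3 l) = of_int (dot3 l v)"
  by (simp add: dir_deriv0_def dot3_def lin3_def varX_def varY_def varZ_def of_int_poly algebra_simps)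

lemma is_basis3_dual:
  assumes "is_basis3 x y z"
  obtains vx vy vz
  where "dot3 x vx = 1" "dot3 y vx = 0" "dot3 z vx = 0"
    and "dot3 x vy = 0" "dot3 y vy = 1" "dot3 z vy = 0"
    and "dot3 x vz = 0" "dot3 y vz = 0" "dot3 z vz = 1"
proof -
  define comb where "comb c = smul3 (fst c) x + smul3 (fst (snd c)) y + smul3 (snd (snd c)) z" for c
  have unique: "\<exists>!c. w = comb c" for w
    using assms unfolding is_basis3_def comb_def by blast
  obtain c1 c2 c3 where c: "(1, 0, 0) = comb c1" "(0, 1, 0) = comb c2" "(0, 0, 1) = comb c3"
    using unique by metis
  define coords where
    "coords w = smul3 (fst w) c1 + smul3 (fst (snd w)) c2 + smul3 (snd (snd w)) c3" for w
  have comb_coords: "comb (coords w) = w" for w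
  proof -
    have "comb (coords w) =
        smul3 (fst w) (comb c1) + smul3 (fst (snd w)) (comb c2) + smul3 (snd (snd w)) (comb c3)"
      by (simp add: comb_def coords_def smul3_def algebra_simps)
    also have "\<dots> = w"
      by (simp flip: c add: smul3_def)
    finally show ?thesis .
  qed
  have coords_eq: "coords w = c" if "w = comb c" for w c
    using unique[of w] comb_coords[of w] that by metis
  have "coords x = (1, 0, 0)" "coords y = (0, 1, 0)" "coords z = (0, 0, 1)"
    by (rule coords_eq, simp add: comb_def smul3_def zero_prod_def)+
  moreover have "dot3 w (fst c1, fst c2, fst c3) = fst (coords w)"
    and "dot3 w (fst (snd c1), fst (snd c2), fst (snd c3)) = fst (snd (coords w))"
    and "dot3 w (snd (snd c1), snd (snd c2), snd (snd c3)) = snd (snd (coords w))" for w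
    by (simp_all add: dot3_def coords_def smul3_def algebra_simps)
  ultimately show thesis
    by (intro that[of "(fst c1, fst c2, fst c3)" "(fst (snd c1), fst (snd c2), fst (snd c3))"
          "(snd (snd c1), snd (snd c2), snd (snd c3))"]) simp_all
qed

lemma module_pointwise: "module (\<lambda>r (f :: 'v \<Rightarrow> 'r::comm_ring_1) v. r * f v)"
  by unfold_locales (auto simp: fun_eq_iff algebra_simps)

lemma (in module) span_common_support:
  assumes "finite F" "F \<subseteq> span B"
  shows "\<exists>T c. finite T \<and> T \<subseteq> B \<and> (\<forall>f\<in>F. f = (\<Sum>a\<in>T. c f a *s a))"
proof -
  have "\<forall>f\<in>F. \<exists>u. finite {v. u v \<noteq> 0} \<and> (\<forall>v. u v \<noteq> 0 \<longrightarrow> v \<in> B)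
      \<and> f = (\<Sum>v | u v \<noteq> 0. u v *s v)"
    using assms(2) unfolding span_explicit' by blast
  then obtain u where u: "\<forall>f\<in>F. finite {v. u f v \<noteq> 0} \<and> (\<forall>v. u f v \<noteq> 0 \<longrightarrow> v \<in> B)
      \<and> f = (\<Sum>v | u f v \<noteq> 0. u f v *s v)"
    by (rule bchoice[elim_format]) blast
  define T where "T = (\<Union>f\<in>F. {v. u f v \<noteq> 0})"
  have T: "finite T" "T \<subseteq> B"
    using assms(1) u by (auto simp: T_def)
  have "f = (\<Sum>a\<in>T. u f a *s a)" if "f \<in> F" for f
  proof -
    have "f = (\<Sum>v | u f v \<noteq> 0. u f v *s v)"
      using u that by blast
    also have "\<dots> = (\<Sum>a\<in>T. u f a *s a)"
      by (rule sum.mono_neutral_left) (use T that in \<open>auto simp: T_def\<close>)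
    finally show ?thesis .
  qed
  with T show ?thesis by blast
qed

lemma mem_Htilde_iff:
  "f \<in> Htilde x y z \<longleftrightarrow>
     (\<forall>v. v \<notin> {1..6} \<longrightarrow> f v = 0) \<and> (\<forall>(a, b, l) \<in> Etilde x y z. lin3 l dvd f b - f a)"
  unfolding Htilde_def graph_cohom_def by auto

lemma Htilde_diff_12:
  assumes "f \<in> Htilde x y z" "dot3 x v = 0" "dot3 y v = 1" "dot3 z v = 0"
  obtains q where "f 2 - f 1 = lin3 y * q" "const_term3 q = 0"
proof -
  obtain q12 q25 q56 q16 where
    "f 2 - f 1 = lin3 y * q12" "f 5 - f 2 = lin3 x * q25"
    "f 6 - f 5 = lin3 z * q56" "f 6 - f 1 = lin3 x * q16"
    using assms(1) unfolding mem_Htilde_iff Etilde_def by (auto elim!: dvdE)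
  moreover from this have "lin3 y * q12 + lin3 x * q25 + lin3 z * q56 - lin3 x * q16 = 0"
    by (simp add: algebra_simps)
  then have "dir_deriv0 v (lin3 y * q12 + lin3 x * q25 + lin3 z * q56 - lin3 x * q16) = 0"
    by simp
  then have "const_term3 q12 = 0"
    using assms(2-4) by simp
  ultimately show thesis
    using that by blast
qed

lemma Htilde_combination_diff_12:
  assumes "T \<subseteq> Htilde x y z" "dot3 x v = 0" "dot3 y v = 1" "dot3 z v = 0"
    and "\<forall>a\<in>T. const_term3 (R a) = 0"
  obtains S
  where "(\<Sum>a\<in>T. R a * a 2) - (\<Sum>a\<in>T. R a * a 1) = lin3 y * S" "\<And>u. dir_deriv0 u S = 0"
proof -
  have "\<forall>a\<in>T. \<exists>q. a 2 - a 1 = lin3 y * q \<and> const_term3 q = 0"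
    using Htilde_diff_12[OF _ assms(2-4)] assms(1) by blast
  then obtain Q where Q: "\<forall>a\<in>T. a 2 - a 1 = lin3 y * Q a \<and> const_term3 (Q a) = 0"
    by (rule bchoice[elim_format]) blast
  have "(\<Sum>a\<in>T. R a * a 2) - (\<Sum>a\<in>T. R a * a 1) = (\<Sum>a\<in>T. R a * (a 2 - a 1))"
    by (simp add: sum_subtractf algebra_simps)
  also have "\<dots> = lin3 y * (\<Sum>a\<in>T. R a * Q a)"
    unfolding sum_distrib_left by (rule sum.cong) (use Q in \<open>auto simp: mult_ac\<close>)
  finally have "(\<Sum>a\<in>T. R a * a 2) - (\<Sum>a\<in>T. R a * a 1) = lin3 y * (\<Sum>a\<in>T. R a * Q a)" .
  moreover have "dir_deriv0 u (\<Sum>a\<in>T. R a * Q a) = 0" for u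
    unfolding dir_deriv0_sum using assms(5) Q by (intro sum.neutral) simp
  ultimately show thesis
    by (rule that)
qed

lemma Htilde_not_free:
  assumes vx: "dot3 x vx = 1" "dot3 y vx = 0" "dot3 z vx = 0"
    and vy: "dot3 x vy = 0" "dot3 y vy = 1" "dot3 z vy = 0"
    and vz: "dot3 x vz = 0" "dot3 y vz = 0" "dot3 z vz = 1"
  shows "\<not> free_submodule (Htilde x y z :: (nat \<Rightarrow> 'k::idom poly poly poly) set)"
proof
  interpret M: module "\<lambda>r (f :: nat \<Rightarrow> 'k poly poly poly) v. r * f v"
    by (rule module_pointwise)
  assume "free_submodule (Htilde x y z :: (nat \<Rightarrow> 'k poly poly poly) set)"
  then obtain B where B: "B \<subseteq> Htilde x y z" "M.independent B" "M.span B = Htilde x y z"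
    unfolding free_submodule_def by blast
  define lx ly lz where "lx = (lin3 x :: 'k poly poly poly)" and "ly = (lin3 y :: 'k poly poly poly)"
    and "lz = (lin3 z :: 'k poly poly poly)"
  define f where "f i = (if i \<in> {1, 4} then lx * ly else 0)" for i :: nat
  define g where "g i = (if i \<in> {1, 3, 4, 6} then ly * lz else 0)" for i :: nat
  define h where "h i = (if i \<in> {3, 6} then - (lx * lz) else 0)" for i :: nat
  have "f \<in> Htilde x y z" "g \<in> Htilde x y z" "h \<in> Htilde x y z"
    unfolding mem_Htilde_iff by (auto simp: f_def g_def h_def lx_def ly_def lz_def Etilde_def)
  then obtain T c where T: "finite T" "T \<subseteq> B"
    and rep: "\<forall>k\<in>{f, g, h}. k = (\<Sum>a\<in>T. (\<lambda>i. c k a * a i))"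
    using M.span_common_support[of "{f, g, h}" B] B(3) by auto
  have rep_at: "k i = (\<Sum>a\<in>T. c k a * a i)" if "k \<in> {f, g, h}" for k i
    using fun_cong[OF bspec[OF rep that], of i] by (simp only: sum_fun_apply)
  have syzygy: "lz * f i - lx * g i - ly * h i = 0" for i
    by (auto simp: f_def g_def h_def algebra_simps)
  have "(\<Sum>a\<in>T. (\<lambda>i. (lz * c f a - lx * c g a - ly * c h a) * a i)) = 0"
  proof
    fix i
    have "(\<Sum>a\<in>T. (\<lambda>i. (lz * c f a - lx * c g a - ly * c h a) * a i)) i
        = lz * (\<Sum>a\<in>T. c f a * a i) - lx * (\<Sum>a\<in>T. c g a * a i) - ly * (\<Sum>a\<in>T. c h a * a i)"
      by (simp add: sum_fun_apply sum_subtractf sum_distrib_left sum.distrib algebra_simps)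
    also have "\<dots> = 0"
      using syzygy[of i] rep_at[of f i] rep_at[of g i] rep_at[of h i] by simp
    finally show "(\<Sum>a\<in>T. (\<lambda>i. (lz * c f a - lx * c g a - ly * c h a) * a i)) i = 0 i"
      by simp
  qed
  then have coeff_syzygy: "lz * c f a - lx * c g a - ly * c h a = 0" if "a \<in> T" for a
    using M.independentD[OF B(2) T _ that, of "\<lambda>a. lz * c f a - lx * c g a - ly * c h a"] by simp
  have const_coeff_f: "const_term3 (c f a) = 0" if "a \<in> T" for a
    using arg_cong[OF coeff_syzygy[OF that], of "dir_deriv0 vz"] vz by (simp add: lx_def ly_def lz_def)
  have "T \<subseteq> Htilde x y z"
    using B(1) T(2) by blast
  then obtain S where S: "(\<Sum>a\<in>T. c f a * a 2) - (\<Sum>a\<in>T. c f a * a 1) = ly * S"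
    "dir_deriv0 vx S = 0"
    using Htilde_combination_diff_12[OF _ vy, where R = "c f"] const_coeff_f unfolding ly_def by blast
  have "ly * S = ly * - lx"
    using rep_at[of f 1] rep_at[of f 2] S(1) by (simp add: f_def mult.commute)
  moreover have "ly \<noteq> 0"
  proof
    assume "ly = 0"
    then have "dir_deriv0 vy ly = 0"
      by simp
    with vy show False
      by (simp add: ly_def)
  qed
  ultimately have "S = - lx"
    by (metis mult_left_cancel)
  with S(2) vx show False
    by (simp add: lx_def)
qed

definition is_ring_hom :: "('a::comm_ring_1 \<Rightarrow> 'b::comm_ring_1) \<Rightarrow> bool" where
  "is_ring_hom F \<longleftrightarrow>
     (\<forall>a b. F (a + b) = F a + F b) \<and> (\<forall>a b. F (a * b) = F a * F b) \<and> F 1 = 1"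

lemma is_ring_hom_0: "is_ring_hom F \<Longrightarrow> F 0 = 0"
  unfolding is_ring_hom_def by (metis add_cancel_right_right add_0)

lemma is_ring_hom_diff: "is_ring_hom F \<Longrightarrow> F (a - b) = F a - F b"
  unfolding is_ring_hom_def by (metis diff_add_cancel eq_diff_eq)

lemma is_ring_hom_mult: "is_ring_hom F \<Longrightarrow> F (a * b) = F a * F b"
  unfolding is_ring_hom_def by blast

lemma is_ring_hom_sum: "is_ring_hom F \<Longrightarrow> F (sum g A) = (\<Sum>a\<in>A. F (g a))"
  by (induct A rule: infinite_finite_induct) (auto simp: is_ring_hom_0 is_ring_hom_def)

lemma is_ring_hom_comp: "is_ring_hom F \<Longrightarrow> is_ring_hom G \<Longrightarrow> is_ring_hom (G \<circ> F)"
  by (simp add: is_ring_hom_def)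

lemma is_ring_hom_map_poly:
  assumes "is_ring_hom F"
  shows "is_ring_hom (map_poly F)"
  unfolding is_ring_hom_def
proof (intro conjI allI)
  have F0: "F 0 = 0"
    using assms by (rule is_ring_hom_0)
  show "map_poly F (p + q) = map_poly F p + map_poly F q" for p q
    using assms F0 by (intro poly_eqI) (simp add: coeff_map_poly is_ring_hom_def)
  show "map_poly F (p * q) = map_poly F p * map_poly F q" for p q
    using assms F0 by (intro poly_eqI) (simp add: coeff_map_poly coeff_mult is_ring_hom_sum is_ring_hom_mult)
  show "map_poly F 1 = 1"
    using assms by (simp add: is_ring_hom_def)
qed

lemma is_ring_hom_poly: "is_ring_hom (\<lambda>p. poly p a)"
  by (simp add: is_ring_hom_def)

lemma is_ring_hom_eval3: "is_ring_hom (eval3 a b c)"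
proof -
  have "eval3 a b c = (\<lambda>P. poly P a) \<circ> map_poly ((\<lambda>Q. poly Q b) \<circ>
      map_poly ((\<lambda>R. poly R c) \<circ> map_poly (\<lambda>r. [:[:r:]:])))"
    by (simp add: eval3_def fun_eq_iff comp_def)
  moreover have "is_ring_hom (\<lambda>r::'a. [:[:r:]:])"
    by (simp add: is_ring_hom_def one_pCons)
  ultimately show ?thesis
    by (simp add: is_ring_hom_comp is_ring_hom_map_poly is_ring_hom_poly)
qed

definition const_term2 :: "'k::comm_ring_1 poly poly \<Rightarrow> 'k" where
  "const_term2 h = coeff (coeff h 0) 0"

lemma const_term2_poly:
  assumes "const_term2 a = 0"
  shows "const_term2 (poly p a) = const_term2 (coeff p 0)"
  using assms by (cases p rule: pCons_cases) (simp add: const_term2_def coeff_mult_0)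

lemma const_term2_lin2 [simp]: "const_term2 (lin2 v) = 0"
  by (simp add: const_term2_def lin2_def varU_def varV_def of_int_poly)

lemma const_term2_eval3:
  assumes "const_term2 a = 0" "const_term2 b = 0" "const_term2 c = 0"
  shows "const_term2 (eval3 a b c P) = const_term3 P"
  using assms
  by (simp add: eval3_def const_term2_poly coeff_map_poly) (simp add: const_term2_def const_term3_def)

lemma lin2_eq_product_imp_zero:
  fixes a b :: "'k::{comm_ring_1, ring_char_0} poly poly"
  assumes "lin2 D = a * b" "const_term2 a = 0" "const_term2 b = 0"
  shows "D = 0"
proof -
  have "coeff (coeff (a * b) 1) 0 = 0" "coeff (coeff (a * b) 0) 1 = 0"
    using assms(2,3) by (simp_all add: const_term2_def coeff_mult_0 coeff_mult_Suc_0)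
  moreover have "coeff (coeff (lin2 D :: 'k poly poly) 1) 0 = of_int (fst D)"
    and "coeff (coeff (lin2 D :: 'k poly poly) 0) 1 = of_int (snd D)"
    by (simp_all add: lin2_def varU_def varV_def of_int_poly)
  ultimately show ?thesis
    using assms(1) by (simp add: prod_eq_iff)
qed

definition smul2 :: "int \<Rightarrow> lat2 \<Rightarrow> lat2" where
  "smul2 c v = (c * fst v, c * snd v)"

lemma lin2_diff: "lin2 (u - v) = lin2 u - lin2 v"
  by (simp add: lin2_def algebra_simps)

lemma lin2_smul2: "lin2 (smul2 c v) = of_int c * lin2 v"
  by (simp add: lin2_def smul2_def algebra_simps)

lemma smul2_diff: "smul2 a v - smul2 b v = smul2 (a - b) v"
  by (simp add: smul2_def algebra_simps)

lemma smul2_eq_0_iff: "smul2 c v = 0 \<longleftrightarrow> c = 0 \<or> v = 0"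
  by (auto simp: smul2_def prod_eq_iff)

text \<open>\<open>weight n\<close> is \<open>t\<^sub>n - t\<^sub>3\<close> in the basis \<open>a1 = t\<^sub>1 - t\<^sub>2\<close>, \<open>a2 = t\<^sub>2 - t\<^sub>3\<close>
  of the root lattice, and \<open>coroot_pairing i j n\<close> is \<open>\<langle>t\<^sub>n, (t\<^sub>i - t\<^sub>j)\<^sup>\<or>\<rangle>\<close>.\<close>

definition weight :: "nat \<Rightarrow> lat2" where
  "weight n = (if n = 1 then (1, 1) else if n = 2 then (0, 1) else (0, 0))"

definition coroot_pairing :: "nat \<Rightarrow> nat \<Rightarrow> nat \<Rightarrow> int" where
  "coroot_pairing i j n = (if n = i then 1 else if n = j then -1 else 0)"

lemma weight_transpose:
  assumes "i \<in> {1, 2, 3}" "j \<in> {1, 2, 3}" "i < j" "n \<in> {1, 2, 3}"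
  shows "weight (transpose i j n) = weight n - smul2 (coroot_pairing i j n) (root i j)"
  using assms by (auto simp: weight_def root_def coroot_pairing_def smul2_def transpose_def zero_prod_def)

lemma inj_on_coroot_pairing:
  assumes "i \<in> {1, 2, 3}" "j \<in> {1, 2, 3}" "i \<noteq> j"
  shows "inj_on (coroot_pairing i j) {1, 2, 3}"
  using assms by (auto simp: inj_on_def coroot_pairing_def)

lemma EGamma_label_nonzero: "(w, w', r) \<in> EGamma \<Longrightarrow> r \<noteq> 0"
  by (auto simp: EGamma_def root_def zero_prod_def)

lemma S3_transpose_comp:
  assumes "w \<in> S3" "i \<in> {1, 2, 3}" "j \<in> {1, 2, 3}"
  shows "transpose i j \<circ> w \<in> S3"
  using assms permutes_compose[OF _ permutes_swap_id[of i "{1, 2, 3}" j]] by (simp add: S3_def)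

text \<open>The class \<open>w \<mapsto> w(t\<^sub>1 - t\<^sub>3)\<close>, the Weyl orbit of the highest root.\<close>

definition highest_root_class :: "(nat \<Rightarrow> nat) \<Rightarrow> 'k::comm_ring_1 poly poly" where
  "highest_root_class w = (if w \<in> S3 then lin2 (weight (w 1) - weight (w 3)) else 0)"

lemma highest_root_class_edge:
  assumes "(w, w', r) \<in> EGamma"
  obtains m where "m \<noteq> 0" "highest_root_class w' - highest_root_class w = lin2 (smul2 m r)"
proof -
  obtain i j where e: "w' = transpose i j \<circ> w" "r = root i j"
    and ij: "w \<in> S3" "i \<in> {1, 2, 3}" "j \<in> {1, 2, 3}" "i < j"
    using assms unfolding EGamma_def by blast
  have pw: "w permutes {1, 2, 3}"
    using ij(1) by (simp add: S3_def)
  have w13: "w 1 \<in> {1, 2, 3}" "w 3 \<in> {1, 2, 3}" "w 1 \<noteq> w 3"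
    using permutes_in_image[OF pw, of 1] permutes_in_image[OF pw, of 3]
      inj_eq[OF permutes_inj[OF pw], of 1 3] by simp_all
  define m where "m = coroot_pairing i j (w 3) - coroot_pairing i j (w 1)"
  have "m \<noteq> 0"
    using inj_on_eq_iff[OF inj_on_coroot_pairing[OF ij(2,3) less_imp_neq[OF ij(4)]] w13(1,2)] w13(3)
    by (simp add: m_def)
  have "highest_root_class w' - highest_root_class w
      = lin2 ((weight (transpose i j (w 1)) - weight (w 1)) - (weight (transpose i j (w 3)) - weight (w 3)))"
    using S3_transpose_comp[OF ij(1-3)] ij(1)
    by (simp add: highest_root_class_def e flip: lin2_diff) (simp add: algebra_simps)
  also have "\<dots> = lin2 (smul2 m r)"
    unfolding weight_transpose[OF ij(2-4) w13(1)] weight_transpose[OF ij(2-4) w13(2)] m_def e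
    by (simp add: algebra_simps flip: smul2_diff)
  finally show thesis
    using that \<open>m \<noteq> 0\<close> by blast
qed

lemma highest_root_class_in_HGamma:
  "(highest_root_class :: (nat \<Rightarrow> nat) \<Rightarrow> 'k::comm_ring_1 poly poly) \<in> HGamma"
  unfolding HGamma_def graph_cohom_def
proof (intro CollectI conjI allI impI ballI)
  show "highest_root_class w = 0" if "w \<notin> S3" for w
    using that by (simp add: highest_root_class_def)
next
  fix e :: "(nat \<Rightarrow> nat) \<times> (nat \<Rightarrow> nat) \<times> 'k poly poly"
  assume "e \<in> (\<lambda>(a, b, l). (a, b, lin2 l)) ` EGamma"
  then obtain w w' r where e: "e = (w, w', lin2 r)" and edge: "(w, w', r) \<in> EGamma"
    by auto
  obtain m where "(highest_root_class w' :: 'k poly poly) - highest_root_class w = lin2 (smul2 m r)"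
    using highest_root_class_edge[OF edge] by blast
  then have "lin2 r dvd (highest_root_class w' :: 'k poly poly) - highest_root_class w"
    by (simp add: lin2_smul2)
  then show "case e of (a, b, l) \<Rightarrow> l dvd highest_root_class b - highest_root_class a"
    by (simp add: e)
qed

lemma pstar_apply:
  assumes "bij_betw \<phi> {1..6} S3" "a \<in> {1..6}"
  shows "pstar p \<phi> f (\<phi> a) = pring p (f a)"
  using assms by (simp add: pstar_def bij_betw_apply bij_betw_inv_into_left)

lemma HGamma_not_subset_pstar_image:
  assumes v: "dot3 x v = 0" "dot3 y v = 1" "dot3 z v = 0"
    and ext: "extends_via x y z p \<phi>"
  shows "\<not> HGamma \<subseteq>
    pstar p \<phi> ` (Htilde x y z :: (nat \<Rightarrow> 'k::{comm_ring_1, ring_char_0} poly poly poly) set)"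
proof
  assume "HGamma \<subseteq> pstar p \<phi> ` (Htilde x y z :: (nat \<Rightarrow> 'k poly poly poly) set)"
  then obtain f :: "nat \<Rightarrow> 'k poly poly poly"
    where f: "f \<in> Htilde x y z" "highest_root_class = pstar p \<phi> f"
    using highest_root_class_in_HGamma by blast
  have bij: "bij_betw \<phi> {1..6} S3"
    using ext by (simp add: extends_via_def)
  have adjacent: "(\<exists>l. (a, b, l) \<in> Etilde x y z \<or> (b, a, l) \<in> Etilde x y z) \<longleftrightarrow>
      (\<exists>r. (\<phi> a, \<phi> b, r) \<in> EGamma)" if "a \<in> {1..6}" "b \<in> {1..6}" for a b
    using ext that unfolding extends_via_def by blast
  have "(1, 2, y) \<in> Etilde x y z"
    by (simp add: Etilde_def)
  moreover have "(1::nat) \<in> {1..6}" "(2::nat) \<in> {1..6}"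
    by simp_all
  ultimately obtain r where "(\<phi> 1, \<phi> 2, r) \<in> EGamma"
    using adjacent by blast
  then obtain m where m: "m \<noteq> 0" and diff:
    "(highest_root_class (\<phi> 2) :: 'k poly poly) - highest_root_class (\<phi> 1) = lin2 (smul2 m r)"
    by (rule highest_root_class_edge)
  obtain q where q: "f 2 - f 1 = lin3 y * q" "const_term3 q = 0"
    using Htilde_diff_12[OF f(1) v] .
  have "lin2 (smul2 m r) = pstar p \<phi> f (\<phi> 2) - pstar p \<phi> f (\<phi> 1)"
    using diff unfolding f(2) by simp
  also have "\<dots> = pring p (f 2) - pring p (f 1)"
    by (simp add: pstar_apply[OF bij])
  also have "\<dots> = pring p (lin3 y) * pring p q"
    unfolding pring_def is_ring_hom_diff[OF is_ring_hom_eval3, symmetric] q(1)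
    by (rule is_ring_hom_mult[OF is_ring_hom_eval3])
  finally have "smul2 m r = 0"
    by (rule lin2_eq_product_imp_zero) (simp_all add: pring_def const_term2_eval3 q(2))
  with m \<open>(\<phi> 1, \<phi> 2, r) \<in> EGamma\<close> show False
    by (simp add: smul2_eq_0_iff EGamma_label_nonzero)
qed

theorem proposition5p1:
  fixes x y z :: lat3 and p :: "lat3 \<Rightarrow> lat2" and \<phi> :: "nat \<Rightarrow> nat \<Rightarrow> nat"
  assumes "is_basis3 x y z"
    and "\<forall>a b. p (a + b) = p a + p b"
    and "surj p"
    and "extends_via x y z p \<phi>"
  shows "\<not> free_submodule (Htilde x y z :: (nat \<Rightarrow> int poly poly poly) set)
       \<and> \<not> (HGamma \<subseteq> pstar p \<phi> ` (Htilde x y z :: (nat \<Rightarrow> int poly poly poly) set))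
       \<and> \<not> free_submodule (Htilde x y z :: (nat \<Rightarrow> rat poly poly poly) set)
       \<and> \<not> (HGamma \<subseteq> pstar p \<phi> ` (Htilde x y z :: (nat \<Rightarrow> rat poly poly poly) set))"
proof -
  obtain vx vy vz
    where dual: "dot3 x vx = 1" "dot3 y vx = 0" "dot3 z vx = 0"
      "dot3 x vy = 0" "dot3 y vy = 1" "dot3 z vy = 0"
      "dot3 x vz = 0" "dot3 y vz = 0" "dot3 z vz = 1"
    using is_basis3_dual[OF assms(1)] .
  show ?thesis
    using Htilde_not_free[OF dual, where 'k = int] Htilde_not_free[OF dual, where 'k = rat]
      HGamma_not_subset_pstar_image[OF dual(4-6) assms(4), where 'k = int]
      HGamma_not_subset_pstar_image[OF dual(4-6) assms(4), where 'k = rat]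
    by blast
qed

end
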